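(* Let $x<w$ in $W$ and let $\mathfrak w=s_1\cdots s_n$ be a reduced word of $w$ which is a good word for $x$, with $\lambda_{x,\mathfrak w}=(i_1,\ldots,i_d)$ and $i_1>1$. Then: (i) $x\not\le s_1w$; (ii) $S(s_1x,s_1w)=S(x,w)$; (iii) the reduced word $s_1\mathfrak w:=s_2\cdots s_n$ of $s_1w$ is a good word for $s_1x$, and $\lambda_{s_1x,s_1\mathfrak w}=(i_1-1,\ldots,i_d-1)$ (positions in $s_2\cdots s_n$ being numbered $1,\ldots,n-1$).
   Context: Let $W$ be the Weyl group of a finite reduced root system $\Phi$ with positive roots $\Phi_+$ and simple reflections $S$; $\ell$ is the length and $\le$ the Bruhat order. For $x\le w$ put $S(x,w)=\{\alpha\in\Phi_+ : x\le ws_\alpha<w\}$. For a reduced word $\mathfrak w=s_1\cdots s_n$ of $w$ ($s_i\in S$), let $\lambda_{x,\mathfrak w}$ be the set of $i\in\{1,\ldots,n\}$ such that $x\le s_1\cdots\widehat{s_i}\cdots s_n$ (the Weyl group element obtained by omitting $s_i$), written as the increasing tuple $(i_1,\ldots,i_d)$, $i_1<\cdots<i_d$. The word $\mathfrak w$ is called a good word for $x$ if $x=s_1\cdots\widehat{s_{i_1}}\cdots\widehat{s_{i_d}}\cdots s_n$ (omitting exactly the positions in $\lambda_{x,\mathfrak w}$). *)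

theory Defs
  imports "HOL-Analysis.Analysis"
begin

definition refl :: "'a::euclidean_space \<Rightarrow> 'a \<Rightarrow> 'a" where
  "refl \<alpha> v = v - (2 * (v \<bullet> \<alpha>) / (\<alpha> \<bullet> \<alpha>)) *\<^sub>R \<alpha>"

definition root_system :: "'a::euclidean_space set \<Rightarrow> bool" where
  "root_system \<Phi> \<longleftrightarrow> finite \<Phi> \<and> 0 \<notin> \<Phi> \<and> span \<Phi> = UNIV
     \<and> (\<forall>\<alpha>\<in>\<Phi>. refl \<alpha> ` \<Phi> = \<Phi>)
     \<and> (\<forall>\<alpha>\<in>\<Phi>. \<forall>\<beta>\<in>\<Phi>. 2 * (\<beta> \<bullet> \<alpha>) / (\<alpha> \<bullet> \<alpha>) \<in> \<int>)"

definition reduced_root_system :: "'a::euclidean_space set \<Rightarrow> bool" where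
  "reduced_root_system \<Phi> \<longleftrightarrow> root_system \<Phi>
     \<and> (\<forall>\<alpha>\<in>\<Phi>. \<forall>c::real. c *\<^sub>R \<alpha> \<in> \<Phi> \<longrightarrow> c = 1 \<or> c = -1)"

text \<open>A positive system is determined by a regular vector \<open>f\<close> (no root orthogonal to it).\<close>
definition regular :: "'a::euclidean_space set \<Rightarrow> 'a \<Rightarrow> bool" where
  "regular \<Phi> f \<longleftrightarrow> (\<forall>\<alpha>\<in>\<Phi>. \<alpha> \<bullet> f \<noteq> 0)"

definition pos_roots :: "'a::euclidean_space set \<Rightarrow> 'a \<Rightarrow> 'a set" where
  "pos_roots \<Phi> f = {\<alpha>\<in>\<Phi>. \<alpha> \<bullet> f > 0}"

definition simple_roots :: "'a::euclidean_space set \<Rightarrow> 'a \<Rightarrow> 'a set" where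
  "simple_roots \<Phi> f = {\<alpha>\<in>pos_roots \<Phi> f.
      \<not> (\<exists>\<beta>\<in>pos_roots \<Phi> f. \<exists>\<gamma>\<in>pos_roots \<Phi> f. \<alpha> = \<beta> + \<gamma>)}"

definition simple_refls :: "'a::euclidean_space set \<Rightarrow> 'a \<Rightarrow> ('a \<Rightarrow> 'a) set" where
  "simple_refls \<Phi> f = refl ` simple_roots \<Phi> f"

definition wprod :: "('a \<Rightarrow> 'a) list \<Rightarrow> 'a \<Rightarrow> 'a" where
  "wprod ws = foldr (\<circ>) ws id"

definition weyl :: "'a::euclidean_space set \<Rightarrow> 'a \<Rightarrow> ('a \<Rightarrow> 'a) set" where
  "weyl \<Phi> f = {wprod ws | ws. set ws \<subseteq> simple_refls \<Phi> f}"

definition len :: "'a::euclidean_space set \<Rightarrow> 'a \<Rightarrow> ('a \<Rightarrow> 'a) \<Rightarrow> nat" where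
  "len \<Phi> f w = (LEAST n. \<exists>ws. set ws \<subseteq> simple_refls \<Phi> f \<and> length ws = n \<and> wprod ws = w)"

definition bruhat_step :: "'a::euclidean_space set \<Rightarrow> 'a \<Rightarrow> (('a \<Rightarrow> 'a) \<times> ('a \<Rightarrow> 'a)) set" where
  "bruhat_step \<Phi> f = {(y, y \<circ> refl \<alpha>) | y \<alpha>. y \<in> weyl \<Phi> f \<and> \<alpha> \<in> pos_roots \<Phi> f
                        \<and> len \<Phi> f y < len \<Phi> f (y \<circ> refl \<alpha>)}"

definition bruhat_le :: "'a::euclidean_space set \<Rightarrow> 'a \<Rightarrow> ('a \<Rightarrow> 'a) \<Rightarrow> ('a \<Rightarrow> 'a) \<Rightarrow> bool" where
  "bruhat_le \<Phi> f x w \<longleftrightarrow> x \<in> weyl \<Phi> f \<and> (x, w) \<in> (bruhat_step \<Phi> f)\<^sup>*"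

definition bruhat_less :: "'a::euclidean_space set \<Rightarrow> 'a \<Rightarrow> ('a \<Rightarrow> 'a) \<Rightarrow> ('a \<Rightarrow> 'a) \<Rightarrow> bool" where
  "bruhat_less \<Phi> f x w \<longleftrightarrow> bruhat_le \<Phi> f x w \<and> x \<noteq> w"

definition Sxw :: "'a::euclidean_space set \<Rightarrow> 'a \<Rightarrow> ('a \<Rightarrow> 'a) \<Rightarrow> ('a \<Rightarrow> 'a) \<Rightarrow> 'a set" where
  "Sxw \<Phi> f x w = {\<alpha>\<in>pos_roots \<Phi> f. bruhat_le \<Phi> f x (w \<circ> refl \<alpha>)
                                    \<and> bruhat_less \<Phi> f (w \<circ> refl \<alpha>) w}"

definition reduced_word :: "'a::euclidean_space set \<Rightarrow> 'a \<Rightarrow> ('a \<Rightarrow> 'a) list \<Rightarrow> ('a \<Rightarrow> 'a) \<Rightarrow> bool" where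
  "reduced_word \<Phi> f ws w \<longleftrightarrow> set ws \<subseteq> simple_refls \<Phi> f \<and> wprod ws = w \<and> length ws = len \<Phi> f w"

text \<open>Omit the \<open>i\<close>-th letter (positions numbered from 1).\<close>
definition omit :: "nat \<Rightarrow> 'b list \<Rightarrow> 'b list" where
  "omit i ws = take (i - 1) ws @ drop i ws"

text \<open>\<open>\<lambda>\<^sub>x\<^sub>,\<^sub>w\<close> as the set of its entries (the tuple is its increasing enumeration).\<close>
definition lam :: "'a::euclidean_space set \<Rightarrow> 'a \<Rightarrow> ('a \<Rightarrow> 'a) \<Rightarrow> ('a \<Rightarrow> 'a) list \<Rightarrow> nat set" where
  "lam \<Phi> f x ws = {i\<in>{1..length ws}. bruhat_le \<Phi> f x (wprod (omit i ws))}"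

definition good_word :: "'a::euclidean_space set \<Rightarrow> 'a \<Rightarrow> ('a \<Rightarrow> 'a) \<Rightarrow> ('a \<Rightarrow> 'a) list \<Rightarrow> bool" where
  "good_word \<Phi> f x ws \<longleftrightarrow> x = wprod (nths ws {j. Suc j \<notin> lam \<Phi> f x ws})"

end

theory Submission
  imports Defs
begin

text \<open>Everything rests on the lifting property of the Bruhat order: for a simple reflection \<open>s\<close>
  the maps sending \<open>z\<close> to the shorter, resp. the longer, of \<open>z\<close> and \<open>s z\<close> are monotone.
  Write \<open>w = s\<^sub>1 w'\<close> with \<open>w' = s\<^sub>2 \<cdots> s\<^sub>n\<close>. The hypothesis \<open>1 \<notin> \<lambda>\<close> says \<open>x \<notpreceq> w'\<close>, and
  monotonicity applied to \<open>x \<preceq> w\<close> then forces \<open>s\<^sub>1 x < x\<close>; it also gives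
  \<open>s\<^sub>1 x \<preceq> z \<longleftrightarrow> x \<preceq> s\<^sub>1 z\<close> for every \<open>z\<close> with \<open>x \<notpreceq> z\<close>. The elements \<open>w' s\<^sub>\<alpha> < w'\<close> and the
  products of \<open>s\<^sub>2 \<cdots> s\<^sub>n\<close> with one letter omitted all lie below \<open>w'\<close>, hence not above \<open>x\<close>; this
  gives (ii) and the shift of \<open>\<lambda>\<close>, after which the good-word property is cancellation of \<open>s\<^sub>1\<close>.

  The Coxeter-theoretic input (strong exchange, length read off from inverted roots) is derived
  from the root system; the key fact is that a simple reflection permutes the positive roots
  other than its own root.\<close>

section \<open>Reflections and roots\<close>

lemma inner_refl: "a \<noteq> 0 \<Longrightarrow> refl a u \<bullet> refl a v = u \<bullet> v"
  unfolding refl_def by (simp add: inner_diff_left inner_diff_right inner_commute field_simps)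

lemma refl_refl: "a \<noteq> 0 \<Longrightarrow> refl a (refl a v) = v"
  unfolding refl_def by (simp add: algebra_simps)

lemma refl_o_refl: "a \<noteq> 0 \<Longrightarrow> refl a \<circ> refl a = id"
  by (rule ext) (simp add: refl_refl)

lemma refl_uminus: "refl (-a) = refl a"
  by (rule ext) (simp add: refl_def)

lemma refl_self: "a \<noteq> 0 \<Longrightarrow> refl a a = -a"
  by (simp add: refl_def scaleR_2)

lemma linear_refl: "linear (refl a)"
  by (rule linearI) (simp_all add: refl_def inner_add_left add_divide_distrib scaleR_add_left algebra_simps)

lemma orthogonal_transformation_refl: "a \<noteq> 0 \<Longrightarrow> orthogonal_transformation (refl a)"
  by (simp add: orthogonal_transformation_def linear_refl inner_refl)

locale positive_system =
  fixes \<Phi> :: "'a::euclidean_space set" and f :: 'a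
  assumes reduced: "reduced_root_system \<Phi>" and regular: "regular \<Phi> f"
begin

abbreviation "Pos \<equiv> pos_roots \<Phi> f"
abbreviation "\<Delta> \<equiv> simple_roots \<Phi> f"
abbreviation "S \<equiv> simple_refls \<Phi> f"
abbreviation "W \<equiv> weyl \<Phi> f"
abbreviation "L \<equiv> len \<Phi> f"
abbreviation bruhat_le_syntax (infix "\<preceq>" 50) where "x \<preceq> y \<equiv> bruhat_le \<Phi> f x y"

lemma finite_roots: "finite \<Phi>"
  and root_nonzero: "\<alpha> \<in> \<Phi> \<Longrightarrow> \<alpha> \<noteq> 0"
  and refl_root: "\<alpha> \<in> \<Phi> \<Longrightarrow> \<beta> \<in> \<Phi> \<Longrightarrow> refl \<alpha> \<beta> \<in> \<Phi>"
  and cartan_integer: "\<alpha> \<in> \<Phi> \<Longrightarrow> \<beta> \<in> \<Phi> \<Longrightarrow> 2 * (\<beta> \<bullet> \<alpha>) / (\<alpha> \<bullet> \<alpha>) \<in> \<int>"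
  and root_multiple: "\<alpha> \<in> \<Phi> \<Longrightarrow> c *\<^sub>R \<alpha> \<in> \<Phi> \<Longrightarrow> c = 1 \<or> c = -1"
  using reduced unfolding reduced_root_system_def root_system_def by blast+

lemma uminus_root: "\<alpha> \<in> \<Phi> \<Longrightarrow> -\<alpha> \<in> \<Phi>"
  by (metis refl_root refl_self root_nonzero)

lemma pos_roots_iff: "\<beta> \<in> Pos \<longleftrightarrow> \<beta> \<in> \<Phi> \<and> \<beta> \<bullet> f > 0"
  unfolding pos_roots_def by auto

lemma simple_pos: "\<alpha> \<in> \<Delta> \<Longrightarrow> \<alpha> \<in> Pos"
  unfolding simple_roots_def by auto

lemma simple_root: "\<alpha> \<in> \<Delta> \<Longrightarrow> \<alpha> \<in> \<Phi>"
  using simple_pos pos_roots_iff by auto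

lemma finite_simple: "finite \<Delta>"
  using finite_subset[OF _ finite_roots] simple_root by blast

lemma finite_pos: "finite Pos"
  using finite_subset[OF _ finite_roots] pos_roots_iff by blast

lemma root_pos_or_neg: "\<beta> \<in> \<Phi> \<Longrightarrow> \<beta> \<in> Pos \<or> -\<beta> \<in> Pos"
  using regular uminus_root unfolding regular_def pos_roots_iff
  by (metis inner_minus_left neg_0_less_iff_less linorder_neqE_linordered_idom)

lemma uminus_pos_notin_pos: "\<beta> \<in> Pos \<Longrightarrow> -\<beta> \<notin> Pos"
  using pos_roots_iff by (auto simp: inner_minus_left)

lemma pos_root_induct[consumes 1, case_names step]:
  assumes "\<beta> \<in> Pos"
    and step: "\<And>\<beta>. \<beta> \<in> Pos \<Longrightarrow> (\<And>\<gamma>. \<gamma> \<in> Pos \<Longrightarrow> \<gamma> \<bullet> f < \<beta> \<bullet> f \<Longrightarrow> Q \<gamma>) \<Longrightarrow> Q \<beta>"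
  shows "Q \<beta>"
  using assms(1)
proof (induction "card {\<gamma>\<in>Pos. \<gamma> \<bullet> f < \<beta> \<bullet> f}" arbitrary: \<beta> rule: less_induct)
  case (less \<beta>)
  show ?case
  proof (rule step[OF less.prems])
    fix \<gamma> assume \<gamma>: "\<gamma> \<in> Pos" "\<gamma> \<bullet> f < \<beta> \<bullet> f"
    have "{\<gamma>'\<in>Pos. \<gamma>' \<bullet> f < \<gamma> \<bullet> f} \<subset> {\<gamma>\<in>Pos. \<gamma> \<bullet> f < \<beta> \<bullet> f}"
      using \<gamma> by auto
    then have "card {\<gamma>'\<in>Pos. \<gamma>' \<bullet> f < \<gamma> \<bullet> f} < card {\<gamma>\<in>Pos. \<gamma> \<bullet> f < \<beta> \<bullet> f}"
      using finite_pos by (auto intro: psubset_card_mono)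
    then show "Q \<gamma>" using less.hyps \<gamma> by blast
  qed
qed

definition nonneg_simple_comb :: "'a \<Rightarrow> bool" where
  "nonneg_simple_comb \<beta> \<longleftrightarrow> (\<exists>c. (\<forall>\<delta>\<in>\<Delta>. c \<delta> \<ge> 0) \<and> \<beta> = (\<Sum>\<delta>\<in>\<Delta>. c \<delta> *\<^sub>R \<delta>))"

lemma nonneg_simple_comb_add:
  "nonneg_simple_comb a \<Longrightarrow> nonneg_simple_comb b \<Longrightarrow> nonneg_simple_comb (a + b)"
  unfolding nonneg_simple_comb_def
proof (elim exE conjE)
  fix c d
  assume "\<forall>\<delta>\<in>\<Delta>. 0 \<le> c \<delta>" "a = (\<Sum>\<delta>\<in>\<Delta>. c \<delta> *\<^sub>R \<delta>)" "\<forall>\<delta>\<in>\<Delta>. 0 \<le> d \<delta>" "b = (\<Sum>\<delta>\<in>\<Delta>. d \<delta> *\<^sub>R \<delta>)"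
  then show "\<exists>e. (\<forall>\<delta>\<in>\<Delta>. 0 \<le> e \<delta>) \<and> a + b = (\<Sum>\<delta>\<in>\<Delta>. e \<delta> *\<^sub>R \<delta>)"
    by (intro exI[of _ "\<lambda>\<delta>. c \<delta> + d \<delta>"]) (simp add: scaleR_add_left sum.distrib)
qed

lemma nonneg_simple_comb_simple:
  assumes "\<alpha> \<in> \<Delta>" shows "nonneg_simple_comb \<alpha>"
proof -
  have "(\<Sum>\<delta>\<in>\<Delta>. (if \<delta> = \<alpha> then 1 else 0) *\<^sub>R \<delta>) = (\<Sum>\<delta>\<in>\<Delta>. if \<delta> = \<alpha> then \<alpha> else 0)"
    by (rule sum.cong) auto
  also have "\<dots> = \<alpha>" using assms finite_simple by simp
  finally show ?thesis unfolding nonneg_simple_comb_def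
    by (intro exI[of _ "\<lambda>\<delta>. if \<delta> = \<alpha> then 1 else 0"]) simp
qed

lemma pos_root_nonneg_simple_comb: "\<beta> \<in> Pos \<Longrightarrow> nonneg_simple_comb \<beta>"
proof (induction rule: pos_root_induct)
  case (step \<beta>)
  show ?case
  proof (cases "\<beta> \<in> \<Delta>")
    case True
    then show ?thesis by (rule nonneg_simple_comb_simple)
  next
    case False
    then obtain \<beta>\<^sub>1 \<beta>\<^sub>2 where \<beta>: "\<beta>\<^sub>1 \<in> Pos" "\<beta>\<^sub>2 \<in> Pos" "\<beta> = \<beta>\<^sub>1 + \<beta>\<^sub>2"
      using step(1) unfolding simple_roots_def by auto
    then have "\<beta>\<^sub>1 \<bullet> f < \<beta> \<bullet> f" "\<beta>\<^sub>2 \<bullet> f < \<beta> \<bullet> f"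
      using pos_roots_iff by (auto simp: inner_add_left)
    then show ?thesis using step(2) \<beta> nonneg_simple_comb_add by metis
  qed
qed

lemma roots_inner_strict_Cauchy_Schwarz:
  assumes \<alpha>: "\<alpha> \<in> \<Phi>" and \<beta>: "\<beta> \<in> \<Phi>" and "\<beta> \<noteq> \<alpha>" "\<beta> \<noteq> -\<alpha>"
  shows "(\<alpha> \<bullet> \<beta>)\<^sup>2 < (\<alpha> \<bullet> \<alpha>) * (\<beta> \<bullet> \<beta>)"
proof -
  have norm\<alpha>: "norm \<alpha> > 0" using root_nonzero[OF \<alpha>] by simp
  have "\<bar>\<alpha> \<bullet> \<beta>\<bar> \<noteq> norm \<alpha> * norm \<beta>"
  proof
    assume "\<bar>\<alpha> \<bullet> \<beta>\<bar> = norm \<alpha> * norm \<beta>"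
    then have "norm \<alpha> *\<^sub>R \<beta> = norm \<beta> *\<^sub>R \<alpha> \<or> norm \<alpha> *\<^sub>R \<beta> = - norm \<beta> *\<^sub>R \<alpha>"
      using norm_cauchy_schwarz_abs_eq by blast
    then obtain c where c: "\<beta> = c *\<^sub>R \<alpha>"
    proof
      assume "norm \<alpha> *\<^sub>R \<beta> = norm \<beta> *\<^sub>R \<alpha>"
      then have "\<beta> = (norm \<beta> / norm \<alpha>) *\<^sub>R \<alpha>" using norm\<alpha> by (simp add: eq_vector_fraction_iff)
      then show ?thesis using that by blast
    next
      assume "norm \<alpha> *\<^sub>R \<beta> = - norm \<beta> *\<^sub>R \<alpha>"
      then have "norm \<alpha> *\<^sub>R (- \<beta>) = norm \<beta> *\<^sub>R \<alpha>" by simp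
      then have "- \<beta> = (norm \<beta> / norm \<alpha>) *\<^sub>R \<alpha>" using norm\<alpha> by (simp add: eq_vector_fraction_iff)
      then have "\<beta> = (- (norm \<beta> / norm \<alpha>)) *\<^sub>R \<alpha>" by (metis minus_minus scaleR_minus_left)
      then show ?thesis using that by blast
    qed
    then have "c = 1 \<or> c = -1" using root_multiple \<alpha> \<beta> by blast
    then show False using c assms(3,4) by auto
  qed
  then have "\<bar>\<alpha> \<bullet> \<beta>\<bar> < norm \<alpha> * norm \<beta>"
    using Cauchy_Schwarz_ineq2 order_le_neq_trans by blast
  then have "\<bar>\<alpha> \<bullet> \<beta>\<bar>\<^sup>2 < (norm \<alpha> * norm \<beta>)\<^sup>2"
    by (rule power_strict_mono) auto
  then show ?thesis by (simp add: power_mult_distrib power2_norm_eq_inner)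
qed

text \<open>The Cartan integers of \<open>\<alpha>\<close> and \<open>\<beta>\<close> are positive with product less than 4, so one of
  them is 1, and the corresponding reflection maps \<open>\<alpha>\<close> to \<open>\<alpha> - \<beta>\<close> or \<open>\<beta>\<close> to \<open>\<beta> - \<alpha>\<close>.\<close>
lemma diff_roots_root:
  assumes \<alpha>: "\<alpha> \<in> \<Phi>" and \<beta>: "\<beta> \<in> \<Phi>" and pos: "\<alpha> \<bullet> \<beta> > 0" and ne: "\<alpha> \<noteq> \<beta>"
  shows "\<alpha> - \<beta> \<in> \<Phi>"
proof -
  have "\<beta> \<noteq> -\<alpha>"
  proof
    assume "\<beta> = -\<alpha>"
    then have "\<alpha> \<bullet> \<beta> = - (\<alpha> \<bullet> \<alpha>)" by simp
    then show False using pos inner_ge_zero[of \<alpha>] by linarith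
  qed
  then have sq: "(\<alpha> \<bullet> \<beta>)\<^sup>2 < (\<alpha> \<bullet> \<alpha>) * (\<beta> \<bullet> \<beta>)"
    using roots_inner_strict_Cauchy_Schwarz[OF \<alpha> \<beta>] ne by auto
  have \<alpha>\<alpha>: "\<alpha> \<bullet> \<alpha> > 0" and \<beta>\<beta>: "\<beta> \<bullet> \<beta> > 0" using root_nonzero \<alpha> \<beta> by auto
  define n where "n = 2 * (\<alpha> \<bullet> \<beta>) / (\<beta> \<bullet> \<beta>)"
  define m where "m = 2 * (\<beta> \<bullet> \<alpha>) / (\<alpha> \<bullet> \<alpha>)"
  obtain N where N: "n = of_int N" using cartan_integer[OF \<beta> \<alpha>] Ints_cases unfolding n_def by metis
  obtain M where M: "m = of_int M" using cartan_integer[OF \<alpha> \<beta>] Ints_cases unfolding m_def by metis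
  have "n > 0" "m > 0" unfolding n_def m_def using pos \<alpha>\<alpha> \<beta>\<beta> by (simp_all add: inner_commute)
  then have N1: "N \<ge> 1" and M1: "M \<ge> 1" using N M by simp_all
  have "n * m = 4 * (\<alpha> \<bullet> \<beta>)\<^sup>2 / ((\<alpha> \<bullet> \<alpha>) * (\<beta> \<bullet> \<beta>))"
    unfolding n_def m_def by (simp add: inner_commute power2_eq_square field_simps)
  also have "\<dots> < 4" using sq \<alpha>\<alpha> \<beta>\<beta> by (simp add: field_simps)
  finally have "N * M < 4" using N M by (metis of_int_less_iff of_int_mult of_int_numeral)
  have "N = 1 \<or> M = 1"
  proof (rule ccontr)
    assume "\<not> (N = 1 \<or> M = 1)"
    then have "2 * 2 \<le> N * M" using N1 M1 by (intro mult_mono) auto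
    then show False using \<open>N * M < 4\<close> by simp
  qed
  then show ?thesis
  proof
    assume "N = 1"
    then have "refl \<beta> \<alpha> = \<alpha> - \<beta>" using N unfolding refl_def n_def[symmetric] by simp
    then show ?thesis using refl_root[OF \<beta> \<alpha>] by simp
  next
    assume "M = 1"
    then have "refl \<alpha> \<beta> = \<beta> - \<alpha>" using M unfolding refl_def m_def[symmetric] by simp
    then show ?thesis using uminus_root[OF refl_root[OF \<alpha> \<beta>]] by simp
  qed
qed

lemma simple_inner_nonpos:
  assumes \<alpha>: "\<alpha> \<in> \<Delta>" and \<delta>: "\<delta> \<in> \<Delta>" and "\<alpha> \<noteq> \<delta>"
  shows "\<alpha> \<bullet> \<delta> \<le> 0"
proof (rule ccontr)
  assume "\<not> \<alpha> \<bullet> \<delta> \<le> 0"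
  then have "\<alpha> - \<delta> \<in> \<Phi>" using diff_roots_root simple_root \<alpha> \<delta> assms(3) by simp
  then have "\<alpha> - \<delta> \<in> Pos \<or> \<delta> - \<alpha> \<in> Pos" using root_pos_or_neg by fastforce
  moreover have "\<alpha> = (\<alpha> - \<delta>) + \<delta>" "\<delta> = (\<delta> - \<alpha>) + \<alpha>" by simp_all
  ultimately show False using \<alpha> \<delta> simple_pos unfolding simple_roots_def by blast
qed

text \<open>The part \<open>v\<close> of the combination off \<open>\<alpha>\<close> is a multiple \<open>(k - e \<alpha>) \<alpha>\<close> with \<open>v \<bullet> f \<ge> 0\<close>;
  if the coefficient is positive then \<open>v \<bullet> v = (k - e \<alpha>) (\<alpha> \<bullet> v) \<le> 0\<close> because distinct simple roots
  are obtuse. Either way \<open>v \<bullet> f = 0\<close>, which kills every coefficient off \<open>\<alpha>\<close>.\<close>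
lemma nonneg_simple_comb_multiple_simple:
  assumes \<alpha>: "\<alpha> \<in> \<Delta>" and e: "\<forall>\<delta>\<in>\<Delta>. e \<delta> \<ge> 0" and sum: "(\<Sum>\<delta>\<in>\<Delta>. e \<delta> *\<^sub>R \<delta>) = k *\<^sub>R \<alpha>"
  shows "\<forall>\<delta>\<in>\<Delta>-{\<alpha>}. e \<delta> = 0"
proof -
  define v where "v = (\<Sum>\<delta>\<in>\<Delta>-{\<alpha>}. e \<delta> *\<^sub>R \<delta>)"
  have v: "v = (k - e \<alpha>) *\<^sub>R \<alpha>"
    using sum sum.remove[OF finite_simple \<alpha>, of "\<lambda>\<delta>. e \<delta> *\<^sub>R \<delta>"]
    unfolding v_def by (simp add: scaleR_diff_left eq_diff_eq add.commute)
  have \<delta>f: "\<delta> \<bullet> f > 0" if "\<delta> \<in> \<Delta>" for \<delta> using that simple_pos pos_roots_iff by blast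
  have vf: "v \<bullet> f = (\<Sum>\<delta>\<in>\<Delta>-{\<alpha>}. e \<delta> * (\<delta> \<bullet> f))"
    unfolding v_def by (simp add: inner_sum_left)
  have terms: "\<forall>\<delta>\<in>\<Delta>-{\<alpha>}. e \<delta> * (\<delta> \<bullet> f) \<ge> 0" using e \<delta>f by (simp add: less_imp_le)
  have "v \<bullet> f = 0"
  proof (cases "k - e \<alpha> \<le> 0")
    case True
    then have "v \<bullet> f \<le> 0" unfolding v using \<delta>f[OF \<alpha>] by (simp add: mult_nonpos_nonneg)
    moreover have "v \<bullet> f \<ge> 0" unfolding vf using terms by (intro sum_nonneg) auto
    ultimately show ?thesis by simp
  next
    case False
    have "v \<bullet> v = (k - e \<alpha>) * (\<alpha> \<bullet> v)" by (subst (1) v) simp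
    also have "\<alpha> \<bullet> v = (\<Sum>\<delta>\<in>\<Delta>-{\<alpha>}. e \<delta> * (\<alpha> \<bullet> \<delta>))" unfolding v_def by (simp add: inner_sum_right)
    also have "\<dots> \<le> 0"
      using e simple_inner_nonpos[OF \<alpha>] by (intro sum_nonpos) (auto intro: mult_nonneg_nonpos)
    finally have "v \<bullet> v \<le> 0" using False by (simp add: mult_nonneg_nonpos)
    then have "v = 0" by (metis inner_gt_zero_iff not_le)
    then show ?thesis by simp
  qed
  then have "\<forall>\<delta>\<in>\<Delta>-{\<alpha>}. e \<delta> * (\<delta> \<bullet> f) = 0"
    using terms sum_nonneg_eq_0_iff[of "\<Delta>-{\<alpha>}" "\<lambda>\<delta>. e \<delta> * (\<delta> \<bullet> f)"] finite_simple vf by auto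
  then show ?thesis using \<delta>f by force
qed

text \<open>Otherwise \<open>\<beta>\<close> and \<open>-s\<^sub>\<alpha> \<beta>\<close> are nonnegative simple combinations whose sum is a multiple of \<open>\<alpha>\<close>,
  so \<open>\<beta>\<close> itself is a multiple of \<open>\<alpha>\<close>.\<close>
lemma refl_simple_pos:
  assumes \<alpha>: "\<alpha> \<in> \<Delta>" and \<beta>: "\<beta> \<in> Pos" and ne: "\<beta> \<noteq> \<alpha>"
  shows "refl \<alpha> \<beta> \<in> Pos"
proof (rule ccontr)
  assume "refl \<alpha> \<beta> \<notin> Pos"
  then have neg: "- refl \<alpha> \<beta> \<in> Pos"
    using root_pos_or_neg refl_root simple_root[OF \<alpha>] \<beta> pos_roots_iff by blast
  obtain c where c: "\<forall>\<delta>\<in>\<Delta>. c \<delta> \<ge> 0" "\<beta> = (\<Sum>\<delta>\<in>\<Delta>. c \<delta> *\<^sub>R \<delta>)"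
    using pos_root_nonneg_simple_comb[OF \<beta>] unfolding nonneg_simple_comb_def by blast
  obtain d where d: "\<forall>\<delta>\<in>\<Delta>. d \<delta> \<ge> 0" "- refl \<alpha> \<beta> = (\<Sum>\<delta>\<in>\<Delta>. d \<delta> *\<^sub>R \<delta>)"
    using pos_root_nonneg_simple_comb[OF neg] unfolding nonneg_simple_comb_def by blast
  have "(\<Sum>\<delta>\<in>\<Delta>. (c \<delta> + d \<delta>) *\<^sub>R \<delta>) = \<beta> + - refl \<alpha> \<beta>"
    using c(2) d(2) by (simp add: scaleR_add_left sum.distrib)
  also have "\<dots> = (2 * (\<beta> \<bullet> \<alpha>) / (\<alpha> \<bullet> \<alpha>)) *\<^sub>R \<alpha>" unfolding refl_def by simp
  finally have sum: "(\<Sum>\<delta>\<in>\<Delta>. (c \<delta> + d \<delta>) *\<^sub>R \<delta>) = (2 * (\<beta> \<bullet> \<alpha>) / (\<alpha> \<bullet> \<alpha>)) *\<^sub>R \<alpha>" .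
  have "\<forall>\<delta>\<in>\<Delta>-{\<alpha>}. c \<delta> + d \<delta> = 0"
    by (rule nonneg_simple_comb_multiple_simple[OF \<alpha> _ sum]) (use c(1) d(1) in auto)
  then have "\<forall>\<delta>\<in>\<Delta>-{\<alpha>}. c \<delta> = 0" using c(1) d(1) by (simp add: add_nonneg_eq_0_iff)
  then have "\<beta> = c \<alpha> *\<^sub>R \<alpha>"
    using c(2) sum.remove[OF finite_simple \<alpha>, of "\<lambda>\<delta>. c \<delta> *\<^sub>R \<delta>"] by simp
  moreover have "c \<alpha> = 1 \<or> c \<alpha> = -1"
    using calculation root_multiple[OF simple_root[OF \<alpha>], of "c \<alpha>"] \<beta> pos_roots_iff by auto
  ultimately show False using ne uminus_pos_notin_pos[OF simple_pos[OF \<alpha>]] \<beta> by auto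
qed

section \<open>Weyl group and length\<close>

lemma wprod_Nil [simp]: "wprod [] = id"
  by (simp add: wprod_def)

lemma wprod_Cons [simp]: "wprod (a # l) = a \<circ> wprod l"
  by (simp add: wprod_def)

lemma wprod_append: "wprod (l\<^sub>1 @ l\<^sub>2) = wprod l\<^sub>1 \<circ> wprod l\<^sub>2"
  by (induction l\<^sub>1) auto

lemma simple_reflE:
  assumes "s \<in> S" obtains \<alpha> where "\<alpha> \<in> \<Delta>" "s = refl \<alpha>"
  using assms unfolding simple_refls_def by auto

lemma refl_in_simple_refls: "\<alpha> \<in> \<Delta> \<Longrightarrow> refl \<alpha> \<in> S"
  unfolding simple_refls_def by blast

lemma simple_refl_o_self: "s \<in> S \<Longrightarrow> s \<circ> s = id"
  by (metis simple_reflE refl_o_refl root_nonzero simple_root)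

lemma simple_refl_cancel: "s \<in> S \<Longrightarrow> s \<circ> (s \<circ> g) = g"
  by (simp add: o_assoc simple_refl_o_self)

lemma wprod_in_weyl: "set l \<subseteq> S \<Longrightarrow> wprod l \<in> W"
  unfolding weyl_def by auto

lemma weylE:
  assumes "y \<in> W" obtains l where "set l \<subseteq> S" "wprod l = y"
  using assms unfolding weyl_def by auto

lemma id_in_weyl: "id \<in> W"
  using wprod_in_weyl[of "[]"] by simp

lemma weyl_comp: "y \<in> W \<Longrightarrow> z \<in> W \<Longrightarrow> y \<circ> z \<in> W"
  by (metis weylE wprod_append wprod_in_weyl le_sup_iff set_append)

lemma simple_refl_in_weyl: "s \<in> S \<Longrightarrow> s \<in> W"
  using wprod_in_weyl[of "[s]"] by simp

lemma simple_refl_comp_in_weyl: "s \<in> S \<Longrightarrow> y \<in> W \<Longrightarrow> s \<circ> y \<in> W"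
  using weyl_comp simple_refl_in_weyl by blast

lemma weyl_induct [consumes 1, case_names id simple_comp]:
  assumes "y \<in> W" and "Q id" and "\<And>s y. s \<in> S \<Longrightarrow> y \<in> W \<Longrightarrow> Q y \<Longrightarrow> Q (s \<circ> y)"
  shows "Q y"
proof -
  obtain l where "set l \<subseteq> S" "wprod l = y" using assms(1) by (rule weylE)
  then show ?thesis
    using assms(2,3) by (induction l arbitrary: y) (auto intro: wprod_in_weyl)
qed

lemma weyl_orthogonal: "y \<in> W \<Longrightarrow> orthogonal_transformation y"
proof (induction rule: weyl_induct)
  case id
  then show ?case by (simp add: id_def)
next
  case (simple_comp s y)
  then show ?case
    by (metis orthogonal_transformation_compose orthogonal_transformation_refl simple_reflE
        root_nonzero simple_root)
qed

lemma weyl_root: "y \<in> W \<Longrightarrow> \<beta> \<in> \<Phi> \<Longrightarrow> y \<beta> \<in> \<Phi>"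
proof (induction arbitrary: \<beta> rule: weyl_induct)
  case (simple_comp s y)
  then show ?case by (metis comp_apply refl_root simple_reflE simple_root)
qed simp

lemma weyl_right_inverse: "y \<in> W \<Longrightarrow> \<exists>z\<in>W. y \<circ> z = id"
proof (induction rule: weyl_induct)
  case id
  show ?case using id_in_weyl by (intro bexI[of _ id]) auto
next
  case (simple_comp s y)
  then obtain z where "z \<in> W" "y \<circ> z = id" by blast
  have "(s \<circ> y) \<circ> (z \<circ> s) = s \<circ> (y \<circ> z) \<circ> s" by (simp add: o_assoc)
  also have "\<dots> = id" using \<open>y \<circ> z = id\<close> simple_refl_o_self[OF simple_comp(1)] by simp
  finally show ?case
    using weyl_comp[OF \<open>z \<in> W\<close> simple_refl_in_weyl[OF simple_comp(1)]] by blast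
qed

lemma weyl_comp_refl: "y \<in> W \<Longrightarrow> y \<circ> refl \<alpha> = refl (y \<alpha>) \<circ> y"
  using weyl_orthogonal[of y]
  by (auto simp: fun_eq_iff refl_def orthogonal_transformation_def linear_diff linear_scale)

lemma exists_simple_inner_pos:
  assumes \<gamma>: "\<gamma> \<in> Pos" shows "\<exists>\<delta>\<in>\<Delta>. \<gamma> \<bullet> \<delta> > 0"
proof (rule ccontr)
  assume "\<not> (\<exists>\<delta>\<in>\<Delta>. \<gamma> \<bullet> \<delta> > 0)"
  then have le: "\<forall>\<delta>\<in>\<Delta>. \<gamma> \<bullet> \<delta> \<le> 0" by auto
  obtain c where c: "\<forall>\<delta>\<in>\<Delta>. c \<delta> \<ge> 0" "\<gamma> = (\<Sum>\<delta>\<in>\<Delta>. c \<delta> *\<^sub>R \<delta>)"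
    using pos_root_nonneg_simple_comb[OF \<gamma>] unfolding nonneg_simple_comb_def by blast
  have "\<gamma> \<bullet> \<gamma> = (\<Sum>\<delta>\<in>\<Delta>. c \<delta> * (\<gamma> \<bullet> \<delta>))" by (subst (2) c(2)) (simp add: inner_sum_right)
  also have "\<dots> \<le> 0" using c(1) le by (intro sum_nonpos) (auto intro: mult_nonneg_nonpos)
  finally have "\<gamma> = 0" by (metis inner_gt_zero_iff not_le)
  then show False using \<gamma> pos_roots_iff root_nonzero by auto
qed

text \<open>Induction on the height \<open>\<gamma> \<bullet> f\<close>: reflecting \<open>\<gamma>\<close> in a simple root at an acute angle
  keeps it positive and lowers its height.\<close>
lemma pos_root_weyl_image_simple: "\<gamma> \<in> Pos \<Longrightarrow> \<exists>u\<in>W. \<exists>\<delta>\<in>\<Delta>. \<gamma> = u \<delta>"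
proof (induction rule: pos_root_induct)
  case (step \<gamma>)
  show ?case
  proof (cases "\<gamma> \<in> \<Delta>")
    case True
    then show ?thesis using id_in_weyl by (metis id_apply)
  next
    case False
    obtain \<delta> where \<delta>: "\<delta> \<in> \<Delta>" "\<gamma> \<bullet> \<delta> > 0" using exists_simple_inner_pos[OF step(1)] by blast
    have \<delta>0: "\<delta> \<noteq> 0" using root_nonzero simple_root \<delta>(1) by blast
    have pos: "refl \<delta> \<gamma> \<in> Pos" using refl_simple_pos[OF \<delta>(1) step(1)] False \<delta>(1) by blast
    have "(2 * (\<gamma> \<bullet> \<delta>) / (\<delta> \<bullet> \<delta>)) * (\<delta> \<bullet> f) > 0"
      using \<delta> \<delta>0 simple_pos pos_roots_iff by simp
    then have "refl \<delta> \<gamma> \<bullet> f < \<gamma> \<bullet> f" unfolding refl_def by (simp add: inner_diff_left)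
    then obtain u \<delta>' where u: "u \<in> W" "\<delta>' \<in> \<Delta>" "refl \<delta> \<gamma> = u \<delta>'" using step(2)[OF pos] by blast
    have "\<gamma> = (refl \<delta> \<circ> u) \<delta>'" using u(3) refl_refl[OF \<delta>0] by (metis comp_apply)
    moreover have "refl \<delta> \<circ> u \<in> W"
      using simple_refl_comp_in_weyl[OF refl_in_simple_refls[OF \<delta>(1)] u(1)] .
    ultimately show ?thesis using u(2) by blast
  qed
qed

lemma refl_in_weyl:
  assumes \<gamma>: "\<gamma> \<in> \<Phi>" shows "refl \<gamma> \<in> W"
proof -
  obtain \<gamma>' where \<gamma>': "\<gamma>' \<in> Pos" "refl \<gamma> = refl \<gamma>'"
    using root_pos_or_neg[OF \<gamma>] refl_uminus by metis
  obtain u \<delta> where u: "u \<in> W" "\<delta> \<in> \<Delta>" "\<gamma>' = u \<delta>" using pos_root_weyl_image_simple[OF \<gamma>'(1)] by blast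
  obtain z where z: "z \<in> W" "u \<circ> z = id" using weyl_right_inverse[OF u(1)] by blast
  have "refl \<gamma> = refl (u \<delta>) \<circ> (u \<circ> z)" using \<gamma>' u(3) z(2) by simp
  also have "\<dots> = u \<circ> refl \<delta> \<circ> z" by (simp add: weyl_comp_refl[OF u(1)] o_assoc)
  finally show ?thesis
    using weyl_comp u(1) z(1) simple_refl_in_weyl[OF refl_in_simple_refls[OF u(2)]] by metis
qed

lemma len_attained:
  assumes "y \<in> W" shows "\<exists>l. set l \<subseteq> S \<and> length l = L y \<and> wprod l = y"
proof -
  obtain l where "set l \<subseteq> S" "wprod l = y" using assms by (rule weylE)
  then have "\<exists>n l. set l \<subseteq> S \<and> length l = n \<and> wprod l = y" by blast
  then show ?thesis unfolding len_def by (rule LeastI_ex)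
qed

lemma len_wprod_le: "set l \<subseteq> S \<Longrightarrow> L (wprod l) \<le> length l"
  unfolding len_def by (rule Least_le) blast

lemma len_le_simple_comp:
  assumes s: "s \<in> S" and y: "y \<in> W" shows "L y \<le> L (s \<circ> y) + 1"
proof -
  obtain l where l: "set l \<subseteq> S" "length l = L (s \<circ> y)" "wprod l = s \<circ> y"
    using len_attained[OF simple_refl_comp_in_weyl[OF s y]] by blast
  have "L (wprod (s # l)) \<le> length (s # l)" using l(1) s by (intro len_wprod_le) simp
  then show ?thesis using l(2,3) by (simp add: simple_refl_cancel[OF s])
qed

lemma omit_Cons_Suc: "i \<ge> 1 \<Longrightarrow> omit (Suc i) (a # l) = a # omit i l"
  unfolding omit_def by (cases i) auto

lemma length_omit: "i \<in> {1..length l} \<Longrightarrow> length (omit i l) = length l - 1"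
  unfolding omit_def by auto

lemma set_omit_subset: "set (omit i l) \<subseteq> set l"
  unfolding omit_def using set_take_subset[of "i - 1" l] set_drop_subset[of i l] by auto

lemma strong_exchange:
  assumes "set l \<subseteq> S" "\<gamma> \<in> Pos" "wprod l \<gamma> \<notin> Pos"
  shows "\<exists>i\<in>{1..length l}. wprod l \<circ> refl \<gamma> = wprod (omit i l)"
  using assms(1,3)
proof (induction l)
  case Nil
  then show ?case using assms(2) by simp
next
  case (Cons a l)
  have a: "a \<in> S" and l: "set l \<subseteq> S" using Cons.prems by auto
  obtain \<alpha> where \<alpha>: "\<alpha> \<in> \<Delta>" "a = refl \<alpha>" using a by (rule simple_reflE)
  show ?case
  proof (cases "wprod l \<gamma> \<in> Pos")
    case False
    then obtain i where i: "i \<in> {1..length l}" "wprod l \<circ> refl \<gamma> = wprod (omit i l)"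
      using Cons.IH l by blast
    then have "wprod (a # l) \<circ> refl \<gamma> = wprod (omit (Suc i) (a # l))"
      using omit_Cons_Suc[of i a l] by (simp add: comp_assoc)
    moreover have "Suc i \<in> {1..length (a # l)}" using i by simp
    ultimately show ?thesis by blast
  next
    case True
    txt \<open>The simple reflection \<open>a\<close> makes \<open>wprod l \<gamma>\<close> negative, so \<open>wprod l \<gamma>\<close> is its root.\<close>
    have "wprod l \<gamma> = \<alpha>"
      using refl_simple_pos[OF \<alpha>(1) True] Cons.prems(2) \<alpha>(2) by auto
    then have "wprod l \<circ> refl \<gamma> = a \<circ> wprod l"
      using weyl_comp_refl[OF wprod_in_weyl[OF l]] \<alpha>(2) by simp
    then have "wprod (a # l) \<circ> refl \<gamma> = a \<circ> (a \<circ> wprod l)" by (simp add: comp_assoc)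
    also have "\<dots> = wprod (omit 1 (a # l))" by (simp add: omit_def simple_refl_cancel[OF a])
    finally have "wprod (a # l) \<circ> refl \<gamma> = wprod (omit 1 (a # l))" .
    moreover have "(1::nat) \<in> {1..length (a # l)}" by simp
    ultimately show ?thesis by blast
  qed
qed

lemma len_comp_refl_less:
  assumes y: "y \<in> W" and \<gamma>: "\<gamma> \<in> Pos" and neg: "y \<gamma> \<notin> Pos"
  shows "L (y \<circ> refl \<gamma>) < L y"
proof -
  obtain l where l: "set l \<subseteq> S" "length l = L y" "wprod l = y" using len_attained[OF y] by blast
  have "wprod l \<gamma> \<notin> Pos" using neg l(3) by simp
  from strong_exchange[OF l(1) \<gamma> this]
  obtain i where i: "i \<in> {1..length l}" "wprod l \<circ> refl \<gamma> = wprod (omit i l)" ..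
  have "L (wprod (omit i l)) \<le> length (omit i l)"
    using order_trans[OF set_omit_subset l(1)] by (rule len_wprod_le)
  then have "L (y \<circ> refl \<gamma>) \<le> length l - 1" using i(2) l(3) length_omit[OF i(1)] by simp
  moreover have "length l \<ge> 1" using i(1) by simp
  ultimately show ?thesis using l(2) by linarith
qed

lemma len_less_comp_refl:
  assumes y: "y \<in> W" and \<gamma>: "\<gamma> \<in> Pos" and pos: "y \<gamma> \<in> Pos"
  shows "L y < L (y \<circ> refl \<gamma>)"
proof -
  have \<gamma>0: "\<gamma> \<noteq> 0" using \<gamma> pos_roots_iff root_nonzero by blast
  have y': "y \<circ> refl \<gamma> \<in> W" using weyl_comp[OF y refl_in_weyl] \<gamma> pos_roots_iff by blast
  have "(y \<circ> refl \<gamma>) \<gamma> = y (- \<gamma>)" using refl_self[OF \<gamma>0] by simp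
  also have "\<dots> = - y \<gamma>"
    using linear_neg[OF orthogonal_transformation_linear[OF weyl_orthogonal[OF y]]] .
  finally have "(y \<circ> refl \<gamma>) \<gamma> = - y \<gamma>" .
  then have "L (y \<circ> refl \<gamma> \<circ> refl \<gamma>) < L (y \<circ> refl \<gamma>)"
    using len_comp_refl_less[OF y' \<gamma>] uminus_pos_notin_pos[OF pos] by simp
  then show ?thesis by (simp add: o_assoc[symmetric] refl_o_refl[OF \<gamma>0])
qed

lemma simple_comp_eq_comp_refl:
  assumes s: "s \<in> S" and z: "z \<in> W" shows "\<exists>\<beta>\<in>Pos. s \<circ> z = z \<circ> refl \<beta>"
proof -
  obtain \<alpha> where \<alpha>: "\<alpha> \<in> \<Delta>" "s = refl \<alpha>" using s by (rule simple_reflE)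
  obtain z' where z': "z' \<in> W" "z \<circ> z' = id" using weyl_right_inverse[OF z] by blast
  have root: "z' \<alpha> \<in> \<Phi>" using weyl_root[OF z'(1) simple_root[OF \<alpha>(1)]] .
  have "z (z' \<alpha>) = \<alpha>" using z'(2) by (metis comp_apply id_apply)
  then have "s \<circ> z = z \<circ> refl (z' \<alpha>)" using weyl_comp_refl[OF z, of "z' \<alpha>"] \<alpha>(2) by simp
  then show ?thesis using root_pos_or_neg[OF root] refl_uminus by metis
qed

lemma len_simple_comp_neq:
  assumes s: "s \<in> S" and z: "z \<in> W" shows "L (s \<circ> z) \<noteq> L z"
proof -
  obtain \<beta> where \<beta>: "\<beta> \<in> Pos" "s \<circ> z = z \<circ> refl \<beta>" using simple_comp_eq_comp_refl[OF s z] by blast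
  show ?thesis unfolding \<beta>(2)
    using len_comp_refl_less[OF z \<beta>(1)] len_less_comp_refl[OF z \<beta>(1)] by (cases "z \<beta> \<in> Pos") auto
qed

lemma wprod_eq_omit_comp_refl:
  assumes l: "set l \<subseteq> S" and i: "i \<in> {1..length l}"
  shows "\<exists>\<gamma>\<in>Pos. wprod l = wprod (omit i l) \<circ> refl \<gamma>"
proof -
  obtain j where j: "i = Suc j" "j < length l" using i by (cases i) auto
  define B where "B = wprod (drop i l)"
  have a: "l ! j \<in> S" using l j(2) nth_mem by blast
  have B: "B \<in> W" unfolding B_def using order_trans[OF set_drop_subset l] by (rule wprod_in_weyl)
  obtain \<beta> where \<beta>: "\<beta> \<in> Pos" "l ! j \<circ> B = B \<circ> refl \<beta>"
    using simple_comp_eq_comp_refl[OF a B] by blast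
  have "wprod l = wprod (take j l) \<circ> (l ! j \<circ> B)"
    by (subst id_take_nth_drop[OF j(2)]) (simp add: wprod_append B_def j(1))
  also have "\<dots> = wprod (omit i l) \<circ> refl \<beta>" using \<beta>(2) unfolding omit_def B_def j(1)
    by (simp add: wprod_append o_assoc)
  finally show ?thesis using \<beta>(1) by blast
qed

section \<open>Bruhat order and the lifting property\<close>

lemma bruhat_step_iff:
  "(y, z) \<in> bruhat_step \<Phi> f \<longleftrightarrow> (\<exists>\<gamma>. y \<in> W \<and> \<gamma> \<in> Pos \<and> z = y \<circ> refl \<gamma> \<and> L y < L (y \<circ> refl \<gamma>))"
  unfolding bruhat_step_def by blast

lemma bruhat_le_refl: "x \<in> W \<Longrightarrow> x \<preceq> x"
  unfolding bruhat_le_def by blast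

lemma bruhat_le_trans: "x \<preceq> y \<Longrightarrow> y \<preceq> z \<Longrightarrow> x \<preceq> z"
  unfolding bruhat_le_def by (meson rtrancl_trans)

lemma bruhat_le_comp_refl: "y \<in> W \<Longrightarrow> \<gamma> \<in> Pos \<Longrightarrow> L y < L (y \<circ> refl \<gamma>) \<Longrightarrow> y \<preceq> y \<circ> refl \<gamma>"
  unfolding bruhat_le_def using bruhat_step_iff by (blast intro: r_into_rtrancl)

lemma bruhat_le_len_less: "x \<preceq> w \<Longrightarrow> x \<noteq> w \<Longrightarrow> L x < L w"
proof -
  assume "x \<preceq> w" "x \<noteq> w"
  have "(x, w) \<in> (bruhat_step \<Phi> f)\<^sup>* \<Longrightarrow> x = w \<or> L x < L w"
    by (induction rule: rtrancl_induct) (auto simp: bruhat_step_iff)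
  then show "L x < L w" using \<open>x \<preceq> w\<close> \<open>x \<noteq> w\<close> unfolding bruhat_le_def by blast
qed

lemma bruhat_less_comp_refl_iff:
  assumes u: "u \<in> W" and \<alpha>: "\<alpha> \<in> Pos"
  shows "bruhat_less \<Phi> f (u \<circ> refl \<alpha>) u \<longleftrightarrow> L (u \<circ> refl \<alpha>) < L u"
proof
  assume "bruhat_less \<Phi> f (u \<circ> refl \<alpha>) u"
  then show "L (u \<circ> refl \<alpha>) < L u" unfolding bruhat_less_def using bruhat_le_len_less by blast
next
  assume lt: "L (u \<circ> refl \<alpha>) < L u"
  have \<alpha>0: "\<alpha> \<noteq> 0" using \<alpha> pos_roots_iff root_nonzero by blast
  have u': "u \<circ> refl \<alpha> \<in> W" using weyl_comp[OF u refl_in_weyl] \<alpha> pos_roots_iff by blast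
  have cancel: "u \<circ> refl \<alpha> \<circ> refl \<alpha> = u" by (simp add: comp_assoc refl_o_refl[OF \<alpha>0])
  have "u \<circ> refl \<alpha> \<preceq> u" using bruhat_le_comp_refl[OF u' \<alpha>] lt unfolding cancel by simp
  moreover have "u \<circ> refl \<alpha> \<noteq> u" using lt by auto
  ultimately show "bruhat_less \<Phi> f (u \<circ> refl \<alpha>) u" unfolding bruhat_less_def by blast
qed

lemma bruhat_le_simple_comp: "s \<in> S \<Longrightarrow> z \<in> W \<Longrightarrow> L z < L (s \<circ> z) \<Longrightarrow> z \<preceq> s \<circ> z"
  by (metis simple_comp_eq_comp_refl bruhat_le_comp_refl)

lemma simple_comp_bruhat_le:
  assumes s: "s \<in> S" and z: "z \<in> W" and lt: "L (s \<circ> z) < L z" shows "s \<circ> z \<preceq> z"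
  using bruhat_le_simple_comp[OF s simple_refl_comp_in_weyl[OF s z]] lt
  by (simp add: simple_refl_cancel[OF s])

lemma bruhat_step_simple_comp:
  assumes s: "s \<in> S" and x: "x \<in> W" and \<gamma>: "\<gamma> \<in> Pos" and lt: "L x < L (x \<circ> refl \<gamma>)"
  shows "s \<circ> x = x \<circ> refl \<gamma> \<or> s \<circ> x \<preceq> s \<circ> (x \<circ> refl \<gamma>)"
proof -
  obtain \<alpha> where \<alpha>: "\<alpha> \<in> \<Delta>" "s = refl \<alpha>" using s by (rule simple_reflE)
  have pos: "x \<gamma> \<in> Pos" using len_comp_refl_less[OF x \<gamma>] lt by (meson less_asym)
  show ?thesis
  proof (cases "s (x \<gamma>) \<in> Pos")
    case False
    then have "x \<gamma> = \<alpha>" using refl_simple_pos[OF \<alpha>(1) pos] \<alpha>(2) by blast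
    then show ?thesis using weyl_comp_refl[OF x, of \<gamma>] \<alpha>(2) by simp
  next
    case True
    have sx: "s \<circ> x \<in> W" using simple_refl_comp_in_weyl[OF s x] .
    have "L (s \<circ> x) < L (s \<circ> x \<circ> refl \<gamma>)" using len_less_comp_refl[OF sx \<gamma>] True by simp
    then show ?thesis using bruhat_le_comp_refl[OF sx \<gamma>] by (simp add: comp_assoc)
  qed
qed

definition down :: "('a \<Rightarrow> 'a) \<Rightarrow> ('a \<Rightarrow> 'a) \<Rightarrow> ('a \<Rightarrow> 'a)" where
  "down s z = (if L (s \<circ> z) < L z then s \<circ> z else z)"

definition up :: "('a \<Rightarrow> 'a) \<Rightarrow> ('a \<Rightarrow> 'a) \<Rightarrow> ('a \<Rightarrow> 'a)" where
  "up s z = (if L z < L (s \<circ> z) then s \<circ> z else z)"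

lemma down_in_weyl: "s \<in> S \<Longrightarrow> z \<in> W \<Longrightarrow> down s z \<in> W"
  unfolding down_def using simple_refl_comp_in_weyl by auto

lemma up_in_weyl: "s \<in> S \<Longrightarrow> z \<in> W \<Longrightarrow> up s z \<in> W"
  unfolding up_def using simple_refl_comp_in_weyl by auto

lemma down_le: "s \<in> S \<Longrightarrow> z \<in> W \<Longrightarrow> down s z \<preceq> z"
  unfolding down_def using simple_comp_bruhat_le bruhat_le_refl by auto

lemma down_le_simple_comp:
  assumes s: "s \<in> S" and z: "z \<in> W" shows "down s z \<preceq> s \<circ> z"
proof (cases "L (s \<circ> z) < L z")
  case True
  then show ?thesis unfolding down_def using bruhat_le_refl simple_refl_comp_in_weyl[OF s z] by simp
next
  case False
  then have "L z < L (s \<circ> z)" using len_simple_comp_neq[OF s z] by linarith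
  then show ?thesis unfolding down_def using False bruhat_le_simple_comp[OF s z] by simp
qed

lemma le_up: "s \<in> S \<Longrightarrow> z \<in> W \<Longrightarrow> z \<preceq> up s z"
  unfolding up_def using bruhat_le_simple_comp bruhat_le_refl by auto

lemma simple_comp_le_up:
  assumes s: "s \<in> S" and z: "z \<in> W" shows "s \<circ> z \<preceq> up s z"
proof (cases "L z < L (s \<circ> z)")
  case True
  then show ?thesis unfolding up_def using bruhat_le_refl simple_refl_comp_in_weyl[OF s z] by simp
next
  case False
  then have "L (s \<circ> z) < L z" using len_simple_comp_neq[OF s z] by linarith
  then show ?thesis unfolding up_def using False simple_comp_bruhat_le[OF s z] by simp
qed

text \<open>Lifting property: along a Bruhat step \<open>x \<rightarrow> y\<close> either \<open>{x, s x} = {y, s y}\<close>,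
  or \<open>s x \<preceq> s y\<close>; in the latter case \<open>down s x\<close> lies below both \<open>y\<close> and \<open>s y\<close>, one of which
  is \<open>down s y\<close>, and dually for \<open>up\<close>.\<close>
lemma down_up_bruhat_step:
  assumes s: "s \<in> S" and step: "(x, y) \<in> bruhat_step \<Phi> f"
  shows "down s x \<preceq> down s y \<and> up s x \<preceq> up s y"
proof -
  obtain \<gamma> where \<gamma>: "x \<in> W" "\<gamma> \<in> Pos" "y = x \<circ> refl \<gamma>" "L x < L (x \<circ> refl \<gamma>)"
    using step bruhat_step_iff by blast
  have x: "x \<in> W" and y: "y \<in> W" using \<gamma> weyl_comp refl_in_weyl pos_roots_iff by auto
  have xy: "x \<preceq> y" using bruhat_le_comp_refl[OF x \<gamma>(2,4)] \<gamma>(3) by simp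
  from bruhat_step_simple_comp[OF s x \<gamma>(2,4)] show ?thesis
  proof
    assume "s \<circ> x = x \<circ> refl \<gamma>"
    then have "s \<circ> x = y" "s \<circ> y = x" using \<gamma>(3) simple_refl_cancel[OF s] by metis+
    then have "down s x = x" "down s y = x" "up s x = y" "up s y = y"
      unfolding down_def up_def using \<gamma>(3,4) by auto
    then show ?thesis using bruhat_le_refl x y by simp
  next
    assume "s \<circ> x \<preceq> s \<circ> (x \<circ> refl \<gamma>)"
    then have sxy: "s \<circ> x \<preceq> s \<circ> y" using \<gamma>(3) by simp
    have "down s x \<preceq> y" "down s x \<preceq> s \<circ> y"
      using bruhat_le_trans down_le[OF s x] down_le_simple_comp[OF s x] xy sxy by blast+
    moreover have "x \<preceq> up s y" "s \<circ> x \<preceq> up s y"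
      using bruhat_le_trans le_up[OF s y] simple_comp_le_up[OF s y] xy sxy by blast+
    ultimately show ?thesis unfolding down_def[of s y] up_def[of s x] by auto
  qed
qed

lemma down_up_mono:
  assumes s: "s \<in> S" and le: "x \<preceq> w"
  shows "down s x \<preceq> down s w" and "up s x \<preceq> up s w"
proof -
  have x: "x \<in> W" and steps: "(x, w) \<in> (bruhat_step \<Phi> f)\<^sup>*" using le unfolding bruhat_le_def by auto
  from steps have "down s x \<preceq> down s w \<and> up s x \<preceq> up s w"
  proof (induction rule: rtrancl_induct)
    case base
    show ?case using bruhat_le_refl down_in_weyl[OF s x] up_in_weyl[OF s x] by blast
  next
    case (step y z)
    then show ?case using down_up_bruhat_step[OF s step(2)] bruhat_le_trans by blast
  qed
  then show "down s x \<preceq> down s w" "up s x \<preceq> up s w" by blast+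
qed

section \<open>Removing the first letter of a good word\<close>

lemma reduced_word_Cons:
  assumes "reduced_word \<Phi> f (s # r) w"
  shows "reduced_word \<Phi> f r (s \<circ> w)" and "L (s \<circ> w) < L w"
proof -
  have s: "s \<in> S" and r: "set r \<subseteq> S" and w: "w = s \<circ> wprod r" and Lw: "L w = Suc (length r)"
    using assms unfolding reduced_word_def by auto
  have sw: "s \<circ> w = wprod r" using w simple_refl_cancel[OF s] by simp
  have "w \<in> W" using w simple_refl_comp_in_weyl[OF s wprod_in_weyl[OF r]] by simp
  then have "L w \<le> L (s \<circ> w) + 1" by (rule len_le_simple_comp[OF s])
  then have "L (s \<circ> w) = length r" using len_wprod_le[OF r] sw Lw by simp
  then show "reduced_word \<Phi> f r (s \<circ> w)" "L (s \<circ> w) < L w"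
    unfolding reduced_word_def using r sw Lw by simp_all
qed

lemma wprod_omit_bruhat_le:
  assumes red: "reduced_word \<Phi> f l v" and j: "j \<in> {1..length l}"
  shows "wprod (omit j l) \<preceq> v"
proof -
  have l: "set l \<subseteq> S" and v: "wprod l = v" and Lv: "L v = length l"
    using red unfolding reduced_word_def by auto
  obtain \<gamma> where \<gamma>: "\<gamma> \<in> Pos" "v = wprod (omit j l) \<circ> refl \<gamma>"
    using wprod_eq_omit_comp_refl[OF l j] v by blast
  have omit: "set (omit j l) \<subseteq> S" using order_trans[OF set_omit_subset l] .
  have "L (wprod (omit j l)) < L v"
    using len_wprod_le[OF omit] length_omit[OF j] j Lv by auto
  then show ?thesis using bruhat_le_comp_refl[OF wprod_in_weyl[OF omit] \<gamma>(1)] \<gamma>(2) by simp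
qed

text \<open>If \<open>x \<preceq> w\<close> and \<open>s w < w\<close> then \<open>down s x \<preceq> down s w = s w\<close>; so \<open>x \<notpreceq> s w\<close> forces
  \<open>down s x \<noteq> x\<close>.\<close>
lemma len_simple_comp_less_of_not_le:
  assumes s: "s \<in> S" and le: "x \<preceq> w" and w: "L (s \<circ> w) < L w" and not_le: "\<not> x \<preceq> s \<circ> w"
  shows "L (s \<circ> x) < L x"
proof (rule ccontr)
  assume "\<not> L (s \<circ> x) < L x"
  then have "down s x = x" unfolding down_def by simp
  moreover have "down s w = s \<circ> w" using w unfolding down_def by simp
  ultimately show False using down_up_mono(1)[OF s le] not_le by simp
qed

lemma simple_comp_le_iff:
  assumes s: "s \<in> S" and x: "x \<in> W" and z: "z \<in> W"
    and desc: "L (s \<circ> x) < L x" and not_le: "\<not> x \<preceq> z"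
  shows "s \<circ> x \<preceq> z \<longleftrightarrow> x \<preceq> s \<circ> z"
proof -
  have down_x: "down s x = s \<circ> x" and up_sx: "up s (s \<circ> x) = x"
    using desc unfolding down_def up_def by (simp_all add: simple_refl_cancel[OF s])
  show ?thesis
  proof (cases "L z < L (s \<circ> z)")
    case True
    then have up_z: "up s z = s \<circ> z" and down_sz: "down s (s \<circ> z) = z"
      unfolding down_def up_def by (simp_all add: simple_refl_cancel[OF s])
    show ?thesis
    proof
      assume "s \<circ> x \<preceq> z"
      then show "x \<preceq> s \<circ> z" using down_up_mono(2)[OF s] up_sx up_z by metis
    next
      assume "x \<preceq> s \<circ> z"
      then show "s \<circ> x \<preceq> z" using down_up_mono(1)[OF s] down_x down_sz by metis
    qed
  next
    case False
    then have "up s z = z" and sz: "s \<circ> z \<preceq> z"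
      unfolding up_def using simple_comp_bruhat_le[OF s z] len_simple_comp_neq[OF s z] by auto
    then have "\<not> s \<circ> x \<preceq> z"
      using down_up_mono(2)[OF s, of "s \<circ> x" z] up_sx not_le by auto
    moreover have "\<not> x \<preceq> s \<circ> z" using bruhat_le_trans[OF _ sz] not_le by blast
    ultimately show ?thesis by simp
  qed
qed

lemma Sxw_simple_comp:
  assumes s: "s \<in> S" and x: "x \<in> W" and w: "w \<in> W"
    and desc_x: "L (s \<circ> x) < L x" and desc_w: "L (s \<circ> w) < L w" and not_le: "\<not> x \<preceq> s \<circ> w"
  shows "Sxw \<Phi> f (s \<circ> x) (s \<circ> w) = Sxw \<Phi> f x w"
proof (rule set_eqI)
  fix \<alpha>
  show "\<alpha> \<in> Sxw \<Phi> f (s \<circ> x) (s \<circ> w) \<longleftrightarrow> \<alpha> \<in> Sxw \<Phi> f x w"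
  proof (cases "\<alpha> \<in> Pos")
    case False
    then show ?thesis unfolding Sxw_def by simp
  next
    case \<alpha>: True
    define u where "u = w \<circ> refl \<alpha>"
    have u: "u \<in> W" unfolding u_def using weyl_comp[OF w refl_in_weyl] \<alpha> pos_roots_iff by blast
    have sw: "s \<circ> w \<in> W" and su: "s \<circ> u \<in> W" using simple_refl_comp_in_weyl[OF s] w u by auto
    have swu: "s \<circ> w \<circ> refl \<alpha> = s \<circ> u" unfolding u_def by (simp add: comp_assoc)
    have Lw: "L w = L (s \<circ> w) + 1" using desc_w len_le_simple_comp[OF s w] by linarith
    have S_xw: "\<alpha> \<in> Sxw \<Phi> f x w \<longleftrightarrow> x \<preceq> u \<and> L u < L w"
      unfolding Sxw_def u_def using bruhat_less_comp_refl_iff[OF w \<alpha>] \<alpha> by simp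
    have S_sxsw: "\<alpha> \<in> Sxw \<Phi> f (s \<circ> x) (s \<circ> w) \<longleftrightarrow> s \<circ> x \<preceq> s \<circ> u \<and> L (s \<circ> u) < L (s \<circ> w)"
      unfolding Sxw_def using bruhat_less_comp_refl_iff[OF sw \<alpha>] \<alpha> swu by simp
    have lift: "s \<circ> x \<preceq> s \<circ> u \<longleftrightarrow> x \<preceq> u" if "L (s \<circ> u) < L (s \<circ> w)"
    proof -
      have "s \<circ> u \<preceq> s \<circ> w"
        using bruhat_less_comp_refl_iff[OF sw \<alpha>] that swu unfolding bruhat_less_def by simp
      then have "\<not> x \<preceq> s \<circ> u" using bruhat_le_trans not_le by blast
      then show ?thesis using simple_comp_le_iff[OF s x su desc_x] by (simp add: simple_refl_cancel[OF s])
    qed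
    txt \<open>If \<open>s u > u\<close>, monotonicity of \<open>down s\<close> on \<open>u \<preceq> w\<close> would give \<open>x \<preceq> u \<preceq> s w\<close>.\<close>
    have "L (s \<circ> u) < L (s \<circ> w)" if le: "x \<preceq> u" and lt: "L u < L w"
    proof (rule ccontr)
      assume "\<not> L (s \<circ> u) < L (s \<circ> w)"
      then have "down s u = u" unfolding down_def using lt Lw by simp
      moreover have "u \<preceq> w"
        using bruhat_less_comp_refl_iff[OF w \<alpha>] lt unfolding u_def bruhat_less_def by simp
      moreover have "down s w = s \<circ> w" unfolding down_def using desc_w by simp
      ultimately have "u \<preceq> s \<circ> w" using down_up_mono(1)[OF s] by metis
      then show False using bruhat_le_trans[OF le] not_le by blast
    qed
    moreover have "L u < L w" if "L (s \<circ> u) < L (s \<circ> w)"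
      using that len_le_simple_comp[OF s u] Lw by linarith
    ultimately show ?thesis unfolding S_xw S_sxsw using lift by blast
  qed
qed

lemma lam_Cons:
  assumes s: "s \<in> S" and x: "x \<in> W" and desc: "L (s \<circ> x) < L x"
    and red: "reduced_word \<Phi> f r v" and not_le: "\<not> x \<preceq> v"
  shows "lam \<Phi> f x (s # r) = Suc ` lam \<Phi> f (s \<circ> x) r"
proof -
  have v: "wprod r = v" using red unfolding reduced_word_def by simp
  have shift: "s \<circ> x \<preceq> wprod (omit j r) \<longleftrightarrow> x \<preceq> wprod (omit (Suc j) (s # r))"
    if j: "j \<in> {1..length r}" for j
  proof -
    have r: "set r \<subseteq> S" using red unfolding reduced_word_def by simp
    have z: "wprod (omit j r) \<in> W" using order_trans[OF set_omit_subset r] by (rule wprod_in_weyl)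
    have "\<not> x \<preceq> wprod (omit j r)"
      using bruhat_le_trans[OF _ wprod_omit_bruhat_le[OF red j]] not_le by blast
    then show ?thesis
      using simple_comp_le_iff[OF s x z desc] omit_Cons_Suc[of j s r] j by simp
  qed
  show ?thesis
  proof (rule set_eqI)
    fix i
    show "i \<in> lam \<Phi> f x (s # r) \<longleftrightarrow> i \<in> Suc ` lam \<Phi> f (s \<circ> x) r"
    proof (cases i)
      case 0
      then show ?thesis unfolding lam_def by auto
    next
      case (Suc j)
      show ?thesis
      proof (cases "j = 0")
        case True
        then show ?thesis unfolding lam_def using Suc not_le v by (auto simp: omit_def)
      next
        case False
        then show ?thesis unfolding lam_def using Suc shift[of j] by auto
      qed
    qed
  qed
qed

lemma good_word_Cons:
  assumes s: "s \<in> S" and lam: "lam \<Phi> f x (s # r) = Suc ` lam \<Phi> f (s \<circ> x) r"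
    and good: "good_word \<Phi> f x (s # r)"
  shows "good_word \<Phi> f (s \<circ> x) r"
proof -
  have "0 \<notin> lam \<Phi> f (s \<circ> x) r" unfolding lam_def by simp
  then have first: "0 \<in> {j. Suc j \<notin> lam \<Phi> f x (s # r)}" unfolding lam by auto
  have rest: "{j. Suc j \<in> {j. Suc j \<notin> lam \<Phi> f x (s # r)}} = {j. Suc j \<notin> lam \<Phi> f (s \<circ> x) r}"
    unfolding lam by (auto simp: image_iff)
  have "x = s \<circ> wprod (nths r {j. Suc j \<notin> lam \<Phi> f (s \<circ> x) r})"
    using good first unfolding good_word_def nths_Cons rest by simp
  then show ?thesis unfolding good_word_def using simple_refl_cancel[OF s] by metis
qed

end

theorem lemma5p1:
  fixes \<Phi> :: "'a::euclidean_space set" and f :: 'a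
    and x w :: "'a \<Rightarrow> 'a" and ws :: "('a \<Rightarrow> 'a) list"
  assumes "reduced_root_system \<Phi>" and "regular \<Phi> f"
    and "x \<in> weyl \<Phi> f" and "w \<in> weyl \<Phi> f"
    and "bruhat_less \<Phi> f x w"
    and "reduced_word \<Phi> f ws w"
    and "good_word \<Phi> f x ws"
    and "1 \<notin> lam \<Phi> f x ws"
  shows "\<not> bruhat_le \<Phi> f x (hd ws \<circ> w)
    \<and> Sxw \<Phi> f (hd ws \<circ> x) (hd ws \<circ> w) = Sxw \<Phi> f x w
    \<and> reduced_word \<Phi> f (tl ws) (hd ws \<circ> w)
    \<and> good_word \<Phi> f (hd ws \<circ> x) (tl ws)
    \<and> lam \<Phi> f (hd ws \<circ> x) (tl ws) = (\<lambda>i. i - 1) ` lam \<Phi> f x ws"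
proof -
  interpret positive_system \<Phi> f using assms(1,2) by unfold_locales
  have le: "x \<preceq> w" and ne: "x \<noteq> w" using assms(5) unfolding bruhat_less_def by auto
  obtain s r where ws: "ws = s # r"
  proof (cases ws)
    case Nil
    then have "x = w" using assms(6,7) unfolding good_word_def reduced_word_def by simp
    then show ?thesis using ne by simp
  qed
  have s: "s \<in> S" using assms(6) unfolding ws reduced_word_def by simp
  have red: "reduced_word \<Phi> f r (s \<circ> w)" and desc_w: "L (s \<circ> w) < L w"
    using reduced_word_Cons assms(6) unfolding ws by blast+
  have not_le: "\<not> x \<preceq> s \<circ> w"
    using assms(8) red unfolding ws lam_def reduced_word_def by (auto simp: omit_def)
  have desc_x: "L (s \<circ> x) < L x" using len_simple_comp_less_of_not_le[OF s le desc_w not_le] .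
  have lam: "lam \<Phi> f x (s # r) = Suc ` lam \<Phi> f (s \<circ> x) r"
    using lam_Cons[OF s assms(3) desc_x red not_le] .
  show ?thesis unfolding ws list.sel
    using not_le Sxw_simple_comp[OF s assms(3,4) desc_x desc_w not_le] red
      good_word_Cons[OF s lam assms(7)[unfolded ws]] lam by (simp add: image_image)
qed

end
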